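(* Let $\mathbf t=(\bar t_v)_{v\in\mathcal V}\in(\mathbb C^* )^{\mathcal V}$, write $\bar t_{ij}=\bar t_{v_{ij}}$, and define $b(\mathbf t)\in GL_{n+1}(\mathbb C)$ by $$b(\mathbf t)=x_{\mathbf c}\big((\bar t_{h_a}\bar t_{t_a}^{-1})_{a\in\mathcal A}\big)\,\mathrm{diag}(\bar t_{11},\bar t_{22},\dots,\bar t_{n+1,n+1})\,\dot w_0^{-1}\,x_{\mathbf d}\big((-\bar t_{h_a}\bar t_{t_a}^{-1})_{a\in\mathcal A}\big)^{-1}.$$ Then for $k=1,\dots,n$, in $V(\omega_k)=\bigwedge^k\mathbb C^{n+1}$ with highest weight vector $v^+_{\omega_k}=v_1\wedge\dots\wedge v_k$, $$\langle b(\mathbf t)\cdot v^+_{\omega_k},v^+_{\omega_k}\rangle=\Big(\prod_{i=1}^{n+1}\bar t_{ii}\Big)\Big(\prod_{i-j=k}\bar t_{ij}^{-1}\Big).$$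
   Context: $v_1,\dots,v_{n+1}$ is the standard basis of $\mathbb C^{n+1}$; $\langle w,v^+_{\omega_k}\rangle$ denotes the coefficient of $v_1\wedge\dots\wedge v_k$ in $w\in\bigwedge^k\mathbb C^{n+1}$ with respect to the basis of wedges of standard basis vectors. Matrices: $E_{ij}$ elementary matrices, $x_i(s)=\mathbf 1+sE_{i,i+1}$, $\dot s_i=x_i(1)(\mathbf 1-E_{i+1,i})x_i(1)\in SL_{n+1}$, $\dot w_0$ the product of the $\dot s_i$ along a reduced expression of the longest element of $S_{n+1}$. Quiver: vertices $v_{ij}$, $1\le j\le i\le n+1$ (set $\mathcal V$); arrows $c_{ij}$ from $v_{i+1,j}$ to $v_{ij}$ ($1\le j\le i\le n$) and $d_{ij}$ from $v_{ij}$ to $v_{i,j-1}$ ($2\le j\le i\le n+1$), set $\mathcal A$, with $h_a,t_a$ head and tail. For $\sigma\in(\mathbb C^* )^{\mathcal A}$ (or with entries in $\mathbb C$): $x_{\mathbf c}(\sigma)=\prod_{k=1}^{n}\big(\prod_{j=n}^{k}x_j(\sigma_{c_{j,k}})\big)$ (ordered product, $k$ increasing, $j$ decreasing from $n$ to $k$) and $x_{\mathbf d}(\sigma)=\prod_{k=n}^{1}\big(\prod_{j=1}^{k}x_{n-j+1}(\sigma_{d_{k+1,j+1}})\big)$ ($k$ decreasing, $j$ increasing). *)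

theory Defs
  imports "Jordan_Normal_Form.Determinant"
begin

(* All matrices are (n+1) x (n+1) complex matrices; the paper's 1-based
   indices i,j are mapped to the 0-based JNF indices i-1, j-1. *)

definition elem_mat :: "nat \<Rightarrow> nat \<Rightarrow> nat \<Rightarrow> complex mat" where
  "elem_mat N i j = mat N N (\<lambda>(a,b). if a = i - 1 \<and> b = j - 1 then 1 else 0)"

definition xmat :: "nat \<Rightarrow> nat \<Rightarrow> complex \<Rightarrow> complex mat" where
  "xmat N i s = 1\<^sub>m N + s \<cdot>\<^sub>m elem_mat N i (i+1)"

definition sdot :: "nat \<Rightarrow> nat \<Rightarrow> complex mat" where
  "sdot N i = xmat N i 1 * (1\<^sub>m N - elem_mat N (i+1) i) * xmat N i 1"

definition mprod :: "nat \<Rightarrow> complex mat list \<Rightarrow> complex mat" where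
  "mprod N Ms = foldr (*) Ms (1\<^sub>m N)"

(* dot w_0 along the reduced word  s_1 (s_2 s_1) (s_3 s_2 s_1) ... (s_n ... s_1)
   of the longest element of S_{n+1} *)
definition w0dot :: "nat \<Rightarrow> complex mat" where
  "w0dot n = mprod (n+1) (concat (map (\<lambda>m. map (\<lambda>l. sdot (n+1) (m - l)) [0..<m]) [1..<n+1]))"

definition minv :: "nat \<Rightarrow> complex mat \<Rightarrow> complex mat" where
  "minv N A = (THE B. B \<in> carrier_mat N N \<and> A * B = 1\<^sub>m N \<and> B * A = 1\<^sub>m N)"

(* sigma : arrow-labels given as functions of the arrow indices *)
(* x_c(sigma) = prod_{k=1}^{n} prod_{j=n}^{k} x_j(sigma_{c_{j,k}}) *)
definition x_c :: "nat \<Rightarrow> (nat \<Rightarrow> nat \<Rightarrow> complex) \<Rightarrow> complex mat" where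
  "x_c n sc = mprod (n+1) (concat (map (\<lambda>k. map (\<lambda>j. xmat (n+1) j (sc j k)) (rev [k..<n+1])) [1..<n+1]))"

(* x_d(sigma) = prod_{k=n}^{1} prod_{j=1}^{k} x_{n-j+1}(sigma_{d_{k+1,j+1}}) *)
definition x_d :: "nat \<Rightarrow> (nat \<Rightarrow> nat \<Rightarrow> complex) \<Rightarrow> complex mat" where
  "x_d n sd = mprod (n+1) (concat (map (\<lambda>k. map (\<lambda>j. xmat (n+1) (n - j + 1) (sd (k+1) (j+1))) [1..<k+1]) (rev [1..<n+1])))"

(* b(t); t i j = \bar t_{ij}.
   arrow c_{ij}: v_{i+1,j} -> v_{ij}, so t_h/t_t = t_{ij}/t_{i+1,j};
   arrow d_{ij}: v_{ij} -> v_{i,j-1}, so t_h/t_t = t_{i,j-1}/t_{ij}. *)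
definition bmat :: "nat \<Rightarrow> (nat \<Rightarrow> nat \<Rightarrow> complex) \<Rightarrow> complex mat" where
  "bmat n t =
     x_c n (\<lambda>i j. t i j / t (i+1) j)
     * mat (n+1) (n+1) (\<lambda>(a,b). if a = b then t (a+1) (a+1) else 0)
     * minv (n+1) (w0dot n)
     * minv (n+1) (x_d n (\<lambda>i j. - (t i (j-1) / t i j)))"

(* <g . v^+_{omega_k}, v^+_{omega_k}>: coefficient of v_1 \<and> ... \<and> v_k in
   g v_1 \<and> ... \<and> g v_k, i.e. the leading principal k x k minor of g. *)
definition hw_coeff :: "nat \<Rightarrow> complex mat \<Rightarrow> complex" where
  "hw_coeff k g = det (mat k k (\<lambda>(a,b). g $$ (a,b)))"

end

theory Submission
  imports Defs
begin

(* Right multiplication by the unitriangular matrix x_d(...)^-1 does not change leading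
   principal minors, and w0dot is the signed antidiagonal matrix with entries (-1)^a, so its
   inverse is its transpose.  Hence the k-th leading minor of b(t) is the minor of x_c on its
   first k rows and last k columns, times the last k diagonal entries t_ii.
   Write x_c = X_1 ... X_n with X_m = x_n(s_nm) ... x_m(s_mm).  Left multiplication by X_m adds
   s_(a+1)m times row a+1 to row a for every a >= m-1 (rows counted from 0).  On the rows
   m-1, ..., m+k-2 this is a lower bidiagonal transformation, and row m-1 of X_(m+1) ... X_n is
   a unit row vanishing on the last k columns; so peeling off X_m multiplies the minor by
   s_mm s_(m+1)m ... s_(m+k-1)m.  For s_ij = t_ij / t_(i+1)j this product telescopes to
   t_mm / t_(m+k)m. *)

section \<open>Matrix products, inverses and unitriangular matrices\<close>

lemma index_mult_mat_sum:
  assumes "A \<in> carrier_mat nr n" "B \<in> carrier_mat n nc" "a < nr" "b < nc"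
  shows "(A * B) $$ (a,b) = (\<Sum>l<n. A $$ (a,l) * B $$ (l,b))"
  using assms by (simp add: scalar_prod_def lessThan_atLeast0)

lemma mult_monomial_mat:
  assumes M: "M \<in> carrier_mat nr n" and p: "\<And>b. b < nc \<Longrightarrow> p b < n"
  shows "M * mat n nc (\<lambda>(l,b). if l = p b then c b else 0) = mat nr nc (\<lambda>(a,b). M $$ (a, p b) * c b)"
    (is "M * ?P = ?R")
proof (rule eq_matI)
  fix a b assume "a < dim_row ?R" and "b < dim_col ?R"
  then have a: "a < nr" and b: "b < nc" by auto
  have "(M * ?P) $$ (a,b) = (\<Sum>l<n. M $$ (a,l) * ?P $$ (l,b))"
    by (rule index_mult_mat_sum[OF M _ a b]) simp
  also have "\<dots> = (\<Sum>l<n. if l = p b then M $$ (a, p b) * c b else 0)"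
    using b by (intro sum.cong) auto
  also have "\<dots> = ?R $$ (a,b)"
    using a b p[OF b] by simp
  finally show "(M * ?P) $$ (a,b) = ?R $$ (a,b)" .
qed (use M in auto)

lemma prod_list_diag_mat: "prod_list (diag_mat A) = (\<Prod>i<dim_row A. A $$ (i,i))"
  by (simp add: diag_mat_def prod.distinct_set_conv_list[symmetric] lessThan_atLeast0)

lemma det_upper_triangular_prod:
  "upper_triangular A \<Longrightarrow> A \<in> carrier_mat n n \<Longrightarrow> det A = (\<Prod>i<n. A $$ (i,i))"
  by (simp add: det_upper_triangular prod_list_diag_mat)

lemma det_lower_triangular_prod:
  assumes "\<And>i j. i < j \<Longrightarrow> j < n \<Longrightarrow> A $$ (i,j) = 0" and "A \<in> carrier_mat n n"
  shows "det A = (\<Prod>i<n. A $$ (i,i))"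
  using det_lower_triangular[OF assms] assms(2) by (simp add: prod_list_diag_mat)

lemma det_mat_diag: "det (mat_diag n f) = (\<Prod>i<n. f i)"
  by (subst det_upper_triangular_prod[of _ n]) (auto simp: mat_diag_def)

lemma mprod_Nil [simp]: "mprod N [] = 1\<^sub>m N"
  by (simp add: mprod_def)

lemma mprod_Cons [simp]: "mprod N (A # As) = A * mprod N As"
  by (simp add: mprod_def)

lemma mprod_closed:
  assumes "P (1\<^sub>m N)" and "\<And>A B. P A \<Longrightarrow> P B \<Longrightarrow> P (A * B)" and "\<And>A. A \<in> set As \<Longrightarrow> P A"
  shows "P (mprod N As)"
  using assms(3) by (induction As) (auto intro: assms(1,2))

lemma mprod_carrier:
  "(\<And>A. A \<in> set As \<Longrightarrow> A \<in> carrier_mat N N) \<Longrightarrow> mprod N As \<in> carrier_mat N N"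
  by (rule mprod_closed) auto

lemma mprod_append:
  "(\<And>A. A \<in> set (As @ Bs) \<Longrightarrow> A \<in> carrier_mat N N) \<Longrightarrow>
    mprod N (As @ Bs) = mprod N As * mprod N Bs"
proof (induction As)
  case Nil
  then show ?case using mprod_carrier[of Bs N] by simp
next
  case (Cons A As)
  have "A \<in> carrier_mat N N" "mprod N As \<in> carrier_mat N N" "mprod N Bs \<in> carrier_mat N N"
    using Cons.prems by (auto intro!: mprod_carrier)
  then show ?case using Cons by (simp add: assoc_mult_mat[of A N N _ N _ N])
qed

lemma mprod_concat:
  "(\<And>L A. L \<in> set Ls \<Longrightarrow> A \<in> set L \<Longrightarrow> A \<in> carrier_mat N N) \<Longrightarrow>
    mprod N (concat Ls) = mprod N (map (mprod N) Ls)"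
proof (induction Ls)
  case (Cons L Ls)
  have "mprod N (L @ concat Ls) = mprod N L * mprod N (concat Ls)"
    using Cons.prems by (intro mprod_append) auto
  moreover have "mprod N (concat Ls) = mprod N (map (mprod N) Ls)"
    using Cons.prems by (intro Cons.IH) auto
  ultimately show ?case by simp
qed simp

lemma minv_eqI:
  assumes A: "A \<in> carrier_mat N N" and B: "B \<in> carrier_mat N N"
    and "A * B = 1\<^sub>m N" and "B * A = 1\<^sub>m N"
  shows "minv N A = B"
  unfolding minv_def
proof (rule the_equality)
  fix C assume C: "C \<in> carrier_mat N N \<and> A * C = 1\<^sub>m N \<and> C * A = 1\<^sub>m N"
  then have cC: "C \<in> carrier_mat N N" by blast
  have "C = C * (A * B)" using right_mult_one_mat[OF cC] assms(3) by simp
  also have "\<dots> = (C * A) * B" by (rule assoc_mult_mat[OF cC A B, symmetric])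
  finally show "C = B" using C B by simp
qed (use assms in blast)

lemma minv_left_inverse:
  assumes X: "X \<in> carrier_mat N N" and "det X \<noteq> 0"
  shows "minv N X \<in> carrier_mat N N" and "minv N X * X = 1\<^sub>m N"
proof -
  have "X \<in> Units (ring_mat TYPE(complex) N ())"
    using det_non_zero_imp_unit[OF X] assms(2) .
  then obtain B where B: "B \<in> carrier_mat N N" "B * X = 1\<^sub>m N" "X * B = 1\<^sub>m N"
    unfolding Units_def by (auto simp: ring_mat_simps)
  with minv_eqI[OF X B(1) B(3) B(2)]
  show "minv N X \<in> carrier_mat N N" "minv N X * X = 1\<^sub>m N" by simp_all
qed

definition unit_upper_triangular :: "nat \<Rightarrow> 'a :: comm_ring_1 mat \<Rightarrow> bool" where
  "unit_upper_triangular N U \<longleftrightarrow> U \<in> carrier_mat N N \<and>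
     (\<forall>a<N. \<forall>b<a. U $$ (a,b) = 0) \<and> (\<forall>a<N. U $$ (a,a) = 1)"

lemma unit_upper_triangular_one: "unit_upper_triangular N (1\<^sub>m N)"
  by (simp add: unit_upper_triangular_def)

lemma unit_upper_triangular_mult:
  assumes A: "unit_upper_triangular N A" and B: "unit_upper_triangular N B"
  shows "unit_upper_triangular N (A * B)"
proof -
  have cA: "A \<in> carrier_mat N N" and cB: "B \<in> carrier_mat N N"
    using A B by (auto simp: unit_upper_triangular_def)
  have "(A * B) $$ (a,b) = (\<Sum>l<N. if l = a then (if a = b then 1 else 0) else 0)"
    if "a < N" "b < N" "b \<le> a" for a b
    unfolding index_mult_mat_sum[OF cA cB that(1,2)]
  proof (rule sum.cong)
    fix l assume "l \<in> {..<N}"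
    with A B that show "A $$ (a,l) * B $$ (l,b) = (if l = a then (if a = b then 1 else 0) else 0)"
      unfolding unit_upper_triangular_def by (cases "l < a"; cases "l = a") auto
  qed simp
  then show ?thesis
    using cA cB by (auto simp: unit_upper_triangular_def)
qed

lemma unit_upper_triangular_mprod:
  "(\<And>A. A \<in> set As \<Longrightarrow> unit_upper_triangular N A) \<Longrightarrow> unit_upper_triangular N (mprod N As)"
  by (rule mprod_closed) (auto intro: unit_upper_triangular_one unit_upper_triangular_mult)

lemma det_unit_upper_triangular: "unit_upper_triangular N U \<Longrightarrow> det U = 1"
  by (auto simp: unit_upper_triangular_def upper_triangular_def det_upper_triangular_prod)

lemma hw_coeff_mult_unit_upper_triangular:
  assumes A: "A \<in> carrier_mat N N" and U: "unit_upper_triangular N U" and k: "k \<le> N"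
  shows "hw_coeff k (A * U) = hw_coeff k A"
proof -
  have cU: "U \<in> carrier_mat N N" using U by (simp add: unit_upper_triangular_def)
  define Ak where "Ak = mat k k (\<lambda>(a,b). A $$ (a,b))"
  define Uk where "Uk = mat k k (\<lambda>(a,b). U $$ (a,b))"
  have cAk: "Ak \<in> carrier_mat k k" and cUk: "Uk \<in> carrier_mat k k"
    by (simp_all add: Ak_def Uk_def)
  have "unit_upper_triangular k Uk"
    using U k by (auto simp: unit_upper_triangular_def Uk_def)
  then have "det Uk = 1" by (rule det_unit_upper_triangular)
  moreover have "mat k k (\<lambda>(a,b). (A * U) $$ (a,b)) = Ak * Uk"
  proof (rule eq_matI)
    fix a b assume "a < dim_row (Ak * Uk)" "b < dim_col (Ak * Uk)"
    then have a: "a < k" and b: "b < k" using cAk cUk by auto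
    \<comment> \<open>the rows of \<open>U\<close> below row \<open>k\<close> vanish in its first \<open>k\<close> columns\<close>
    have "(A * U) $$ (a,b) = (\<Sum>l<N. A $$ (a,l) * U $$ (l,b))"
      using a b k by (intro index_mult_mat_sum[OF A cU]) auto
    also have "\<dots> = (\<Sum>l<k. A $$ (a,l) * U $$ (l,b))"
      using a b k U by (intro sum.mono_neutral_right) (auto simp: unit_upper_triangular_def)
    also have "\<dots> = (Ak * Uk) $$ (a,b)"
      using a b by (subst index_mult_mat_sum[OF cAk cUk a b]) (simp add: Ak_def Uk_def)
    finally show "mat k k (\<lambda>(a,b). (A * U) $$ (a,b)) $$ (a,b) = (Ak * Uk) $$ (a,b)"
      using a b by simp
  qed (use cAk cUk in auto)
  ultimately show ?thesis
    unfolding hw_coeff_def Ak_def[symmetric] by (simp add: det_mult[OF cAk cUk])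
qed

lemma hw_coeff_mult_minv_unit_upper_triangular:
  assumes A: "A \<in> carrier_mat N N" and X: "unit_upper_triangular N X" and k: "k \<le> N"
  shows "hw_coeff k (A * minv N X) = hw_coeff k A"
proof -
  have cX: "X \<in> carrier_mat N N" using X by (simp add: unit_upper_triangular_def)
  note inv = minv_left_inverse[OF cX, unfolded det_unit_upper_triangular[OF X]]
  have "A = A * minv N X * X"
    using A inv cX by (simp add: assoc_mult_mat[of A N N _ N X N])
  then have "hw_coeff k A = hw_coeff k (A * minv N X * X)" by simp
  also have "\<dots> = hw_coeff k (A * minv N X)"
    using A inv by (intro hw_coeff_mult_unit_upper_triangular[OF _ X k]) auto
  finally show ?thesis ..
qed

section \<open>Elementary matrices and the lift of the longest element\<close>

lemma xmat_carrier [simp]: "xmat N i s \<in> carrier_mat N N"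
  by (simp add: xmat_def elem_mat_def)

lemma dim_xmat [simp]: "dim_row (xmat N i s) = N" "dim_col (xmat N i s) = N"
  by (simp_all add: xmat_def elem_mat_def)

lemma index_xmat:
  "a < N \<Longrightarrow> b < N \<Longrightarrow>
    xmat N i s $$ (a,b) = (if a = b then 1 else 0) + (if a = i - 1 \<and> b = i then s else 0)"
  by (simp add: xmat_def elem_mat_def)

lemma unit_upper_triangular_xmat: "1 \<le> i \<Longrightarrow> unit_upper_triangular N (xmat N i s)"
  by (auto simp: unit_upper_triangular_def index_xmat)

lemma xmat_mult:
  assumes M: "M \<in> carrier_mat N nc" and i: "1 \<le> i" "i < N"
  shows "xmat N i s * M = mat N nc (\<lambda>(a,b). M $$ (a,b) + (if a = i - 1 then s * M $$ (i,b) else 0))"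
    (is "_ = ?R")
proof (rule eq_matI)
  fix a b assume "a < dim_row ?R" and "b < dim_col ?R"
  then have a: "a < N" and b: "b < nc" by auto
  have "(xmat N i s * M) $$ (a,b) = (\<Sum>l<N. xmat N i s $$ (a,l) * M $$ (l,b))"
    by (rule index_mult_mat_sum[OF xmat_carrier M a b])
  also have "\<dots> = (\<Sum>l<N. (if l = a then M $$ (l,b) else 0)
      + (if l = i then (if a = i - 1 then s * M $$ (l,b) else 0) else 0))"
    using a i by (intro sum.cong) (auto simp: index_xmat algebra_simps)
  also have "\<dots> = ?R $$ (a,b)"
    using a b i by (simp add: sum.distrib)
  finally show "(xmat N i s * M) $$ (a,b) = ?R $$ (a,b)" .
qed (use M in auto)

lemma dim_elem_mat [simp]: "dim_row (elem_mat N j i) = N" "dim_col (elem_mat N j i) = N"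
  by (simp_all add: elem_mat_def)

lemma lower_elem_carrier [simp]: "1\<^sub>m N - elem_mat N j i \<in> carrier_mat N N"
  by (auto simp: elem_mat_def)

lemma lower_elem_mult:
  assumes M: "M \<in> carrier_mat N nc" and i: "1 \<le> i" "i < N"
  shows "(1\<^sub>m N - elem_mat N (i+1) i) * M
    = mat N nc (\<lambda>(a,b). M $$ (a,b) - (if a = i then M $$ (i - 1,b) else 0))"
    (is "?L * _ = ?R")
proof (rule eq_matI)
  fix a b assume "a < dim_row ?R" and "b < dim_col ?R"
  then have a: "a < N" and b: "b < nc" by auto
  have "(?L * M) $$ (a,b) = (\<Sum>l<N. ?L $$ (a,l) * M $$ (l,b))"
    by (rule index_mult_mat_sum[OF lower_elem_carrier M a b])
  also have "\<dots> = (\<Sum>l<N. (if l = a then M $$ (l,b) else 0)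
      - (if l = i - 1 then (if a = i then M $$ (l,b) else 0) else 0))"
    using a i by (intro sum.cong) (auto simp: elem_mat_def algebra_simps)
  also have "\<dots> = ?R $$ (a,b)"
    using a b i by (simp add: sum_subtractf) linarith
  finally show "(?L * M) $$ (a,b) = ?R $$ (a,b)" .
qed (use M in auto)

lemma sdot_carrier [simp]: "sdot N i \<in> carrier_mat N N"
  by (auto simp: sdot_def intro!: mult_carrier_mat)

lemma sdot_mult:
  assumes M: "M \<in> carrier_mat N nc" and i: "1 \<le> i" "i < N"
  shows "sdot N i * M = mat N nc (\<lambda>(a,b).
    if a = i - 1 then M $$ (i,b) else if a = i then - M $$ (i - 1,b) else M $$ (a,b))"
proof -
  let ?X = "xmat N i 1" and ?L = "1\<^sub>m N - elem_mat N (i+1) i"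
  have "sdot N i * M = ?X * (?L * (?X * M))"
    unfolding sdot_def
    using assoc_mult_mat[OF mult_carrier_mat[OF xmat_carrier lower_elem_carrier] xmat_carrier M]
      assoc_mult_mat[OF xmat_carrier lower_elem_carrier mult_carrier_mat[OF xmat_carrier M]]
    by simp
  also have "?X * M = mat N nc (\<lambda>(a,b). M $$ (a,b) + (if a = i - 1 then 1 * M $$ (i,b) else 0))"
    by (rule xmat_mult[OF M i])
  also have "?L * \<dots> = mat N nc (\<lambda>(a,b). (M $$ (a,b) + (if a = i - 1 then 1 * M $$ (i,b) else 0))
      - (if a = i then M $$ (i - 1,b) + M $$ (i,b) else 0))"
    using i by (subst lower_elem_mult) (auto intro!: eq_matI)
  also have "?X * \<dots> = mat N nc (\<lambda>(a,b).
      if a = i - 1 then M $$ (i,b) else if a = i then - M $$ (i - 1,b) else M $$ (a,b))"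
    using i by (subst xmat_mult) (auto intro!: eq_matI)
  finally show ?thesis .
qed

lemma det_sdot: "1 \<le> i \<Longrightarrow> det (sdot N i) = 1"
proof -
  assume i: "1 \<le> i"
  let ?L = "1\<^sub>m N - elem_mat N (i+1) i"
  have "det ?L = (\<Prod>a<N. ?L $$ (a,a))"
    by (rule det_lower_triangular_prod) (auto simp: elem_mat_def)
  also have "\<dots> = 1"
    using i by (intro prod.neutral) (auto simp: elem_mat_def)
  finally have "det ?L = 1" .
  moreover have "det (xmat N i 1) = 1"
    by (rule det_unit_upper_triangular[OF unit_upper_triangular_xmat[OF i]])
  ultimately show ?thesis
    by (simp add: sdot_def det_mult[OF mult_carrier_mat[OF xmat_carrier lower_elem_carrier] xmat_carrier]
      det_mult[OF xmat_carrier lower_elem_carrier])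
qed

definition sdot_cycle :: "nat \<Rightarrow> nat \<Rightarrow> complex mat" where
  "sdot_cycle N m = mprod N (map (\<lambda>l. sdot N (m - l)) [0..<m])"

lemma sdot_cycle_carrier [simp]: "sdot_cycle N m \<in> carrier_mat N N"
  unfolding sdot_cycle_def by (rule mprod_carrier) auto

lemma sdot_cycle_eq:
  "m < N \<Longrightarrow> sdot_cycle N m = mat N N (\<lambda>(l,b).
     if l = (if b = 0 then m else if b \<le> m then b - 1 else b) then (if b = 0 then (-1)^m else 1) else 0)"
proof (induction m)
  case 0
  then show ?case by (auto simp: sdot_cycle_def intro: eq_matI)
next
  case (Suc m)
  have "sdot_cycle N (Suc m) = sdot N (Suc m) * sdot_cycle N m"
    by (simp add: sdot_cycle_def upt_conv_Cons map_Suc_upt[symmetric] comp_def del: upt_Suc)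
  also have "\<dots> = mat N N (\<lambda>(l,b).
     if l = (if b = 0 then Suc m else if b \<le> Suc m then b - 1 else b) then (if b = 0 then (-1)^Suc m else 1) else 0)"
    unfolding Suc.IH[OF Suc_lessD[OF Suc.prems]] using Suc.prems
    by (subst sdot_mult) (auto intro!: eq_matI)
  finally show ?case .
qed

definition w0_prefix :: "nat \<Rightarrow> nat \<Rightarrow> complex mat" where
  "w0_prefix N m = mprod N (map (sdot_cycle N) [1..<m+1])"

lemma w0dot_eq_w0_prefix: "w0dot n = w0_prefix (n+1) n"
  unfolding w0dot_def w0_prefix_def sdot_cycle_def by (subst mprod_concat) (auto simp: comp_def)

lemma w0_prefix_Suc: "w0_prefix N (Suc m) = w0_prefix N m * sdot_cycle N (Suc m)"
proof -
  have "[1..<Suc m + 1] = [1..<m+1] @ [Suc m]" by simp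
  then have "w0_prefix N (Suc m) = w0_prefix N m * mprod N [sdot_cycle N (Suc m)]"
    unfolding w0_prefix_def by (simp only: map_append, subst mprod_append) auto
  then show ?thesis by (simp add: right_mult_one_mat[OF sdot_cycle_carrier])
qed

lemma w0_prefix_eq:
  "m < N \<Longrightarrow> w0_prefix N m = mat N N (\<lambda>(a,b).
     if a \<le> m \<and> b \<le> m then (if a + b = m then (-1)^a else 0) else (if a = b then 1 else 0))"
proof (induction m)
  case 0
  then show ?case by (auto simp: w0_prefix_def)
next
  case (Suc m)
  let ?p = "\<lambda>b. if b = 0 then Suc m else if b \<le> Suc m then b - 1 else b"
  let ?W = "\<lambda>m a b. if a \<le> m \<and> b \<le> m then (if a + b = m then (-1)^a else 0) else (if a = b then 1 else 0 :: complex)"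
  have entry: "?W m a (?p b) * (if b = 0 then (-1)^Suc m else 1) = ?W (Suc m) a b" for a b
    by (cases "b = 0"; cases "b \<le> Suc m") auto
  have "w0_prefix N (Suc m) = mat N N (\<lambda>(a,b). ?W m a (?p b) * (if b = 0 then (-1)^Suc m else 1))"
    unfolding w0_prefix_Suc sdot_cycle_eq[OF Suc.prems] Suc.IH[OF Suc_lessD[OF Suc.prems]]
    using Suc.prems by (subst mult_monomial_mat) auto
  also have "\<dots> = mat N N (\<lambda>(a,b). ?W (Suc m) a b)"
    using entry by (intro cong_mat) auto
  finally show ?case .
qed

lemma w0dot_eq: "w0dot n = mat (n+1) (n+1) (\<lambda>(a,b). if a + b = n then (-1)^a else 0)"
  unfolding w0dot_eq_w0_prefix by (subst w0_prefix_eq) auto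

lemma w0dot_carrier [simp]: "w0dot n \<in> carrier_mat (n+1) (n+1)"
  by (simp add: w0dot_eq)

lemma det_w0dot: "det (w0dot n) = 1"
  unfolding w0dot_def
  by (rule mprod_closed[where P = "\<lambda>A. A \<in> carrier_mat (n+1) (n+1) \<and> det A = 1", THEN conjunct2])
    (auto simp: det_mult det_sdot)

lemma transpose_w0dot:
  "transpose_mat (w0dot n) = mat (n+1) (n+1) (\<lambda>(l,b). if l = n - b then (-1)^b else 0)"
  by (auto simp: w0dot_eq intro!: eq_matI)

lemma minv_w0dot: "minv (n+1) (w0dot n) = transpose_mat (w0dot n)"
proof -
  have "w0dot n * transpose_mat (w0dot n) = mat (n+1) (n+1) (\<lambda>(a,b). w0dot n $$ (a, n - b) * (-1)^b)"
    unfolding transpose_w0dot by (rule mult_monomial_mat[OF w0dot_carrier]) auto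
  also have "\<dots> = 1\<^sub>m (n+1)"
  proof (rule eq_matI)
    fix a b assume "a < dim_row (1\<^sub>m (n+1))" "b < dim_col (1\<^sub>m (n+1))"
    then have "a \<le> n" "b \<le> n" by auto
    then show "mat (n+1) (n+1) (\<lambda>(a,b). w0dot n $$ (a, n - b) * (-1)^b) $$ (a,b) = 1\<^sub>m (n+1) $$ (a,b)"
      by (cases "a = b") (auto simp: w0dot_eq)
  qed auto
  finally have "w0dot n * transpose_mat (w0dot n) = 1\<^sub>m (n+1)" .
  moreover have W: "w0dot n \<in> carrier_mat (n+1) (n+1)" "transpose_mat (w0dot n) \<in> carrier_mat (n+1) (n+1)"
    using w0dot_carrier[of n] by simp_all
  ultimately show ?thesis
    using mat_mult_left_right_inverse[OF W] by (intro minv_eqI[OF W])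
qed

section \<open>Minors of \<open>x_c\<close>\<close>

definition right_minor :: "nat \<Rightarrow> nat \<Rightarrow> 'a :: comm_ring_1 mat \<Rightarrow> 'a" where
  "right_minor k r A = det (mat k k (\<lambda>(a,b). A $$ (r + a, dim_col A - k + b)))"

lemma right_minor_add_next_rows:
  assumes M: "M \<in> carrier_mat nr nc" and rk: "r + k < nr" and kc: "k \<le> nc"
    and zero: "\<And>b. b < k \<Longrightarrow> M $$ (r, nc - k + b) = 0"
  shows "right_minor k r (mat nr nc (\<lambda>(a,b).
      M $$ (a,b) + (if r \<le> a \<and> a + 1 < nr then f (a+1) * M $$ (a+1,b) else 0)))
    = (\<Prod>i<k. f (r+1+i)) * right_minor k (r+1) M"
    (is "right_minor k r ?M' = _")
proof -
  \<comment> \<open>in the last \<open>k\<close> columns, rows \<open>r, \<dots>, r+k-1\<close> of the result are a lower bidiagonal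
    matrix times rows \<open>r+1, \<dots>, r+k\<close> of \<open>M\<close>; row \<open>r\<close> of \<open>M\<close> would enter but vanishes there\<close>
  define U where "U = mat k k (\<lambda>(i,j). if j = i then f (r+1+i) else if j + 1 = i then 1 else 0)"
  define T where "T = mat k k (\<lambda>(i,b). M $$ (r+1+i, nc-k+b))"
  have U: "U \<in> carrier_mat k k" and T: "T \<in> carrier_mat k k" by (simp_all add: U_def T_def)
  have block: "mat k k (\<lambda>(i,b). M $$ (r+i, nc-k+b) + f (r+i+1) * M $$ (r+i+1, nc-k+b)) = U * T"
  proof (rule eq_matI)
    fix i b assume "i < dim_row (U * T)" "b < dim_col (U * T)"
    then have i: "i < k" and b: "b < k" using U T by auto
    have "(U * T) $$ (i,b) = (\<Sum>j<k. U $$ (i,j) * T $$ (j,b))"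
      by (rule index_mult_mat_sum[OF U T i b])
    also have "\<dots> = (\<Sum>j<k. (if j = i then f (r+1+i) * T $$ (i,b) else 0)
        + (if j = i - 1 then (if 1 \<le> i then T $$ (i - 1,b) else 0) else 0))"
      using i by (intro sum.cong) (auto simp: U_def)
    also have "\<dots> = f (r+1+i) * T $$ (i,b) + (if 1 \<le> i then T $$ (i - 1,b) else 0)"
      using i by (simp add: sum.distrib) linarith
    also have "\<dots> = M $$ (r+i, nc-k+b) + f (r+i+1) * M $$ (r+i+1, nc-k+b)"
      using i b zero[OF b] by (cases i) (auto simp: T_def)
    finally show "mat k k (\<lambda>(i,b). M $$ (r+i, nc-k+b) + f (r+i+1) * M $$ (r+i+1, nc-k+b)) $$ (i,b)
        = (U * T) $$ (i,b)" using i b by simp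
  qed (use U T in auto)
  have "mat k k (\<lambda>(a,b). ?M' $$ (r + a, dim_col ?M' - k + b)) = U * T"
    unfolding block[symmetric] using rk kc by (intro cong_mat) auto
  then have "right_minor k r ?M' = det U * det T"
    unfolding right_minor_def by (simp add: det_mult[OF U T])
  moreover have "det T = right_minor k (r+1) M"
    using M by (simp add: right_minor_def T_def)
  moreover have "det U = (\<Prod>i<k. f (r+1+i))"
    by (subst det_lower_triangular_prod[OF _ U]) (auto simp: U_def)
  ultimately show ?thesis by simp
qed

lemma mprod_xmat_desc_mult:
  assumes M: "M \<in> carrier_mat N nc" and m: "1 \<le> m" and h: "h \<le> N"
  shows "mprod N (map (\<lambda>j. xmat N j (f j)) (rev [m..<h])) * M =
    mat N nc (\<lambda>(a,b). M $$ (a,b) + (if m - 1 \<le> a \<and> a + 1 < h then f (a+1) * M $$ (a+1,b) else 0))"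
  using h
proof (induction h)
  case 0
  show ?case using M by auto
next
  case (Suc h)
  show ?case
  proof (cases "m \<le> h")
    case False
    then have "[m..<Suc h] = []" by simp
    then show ?thesis using M False by (auto intro!: eq_matI)
  next
    case True
    let ?R = "mprod N (map (\<lambda>j. xmat N j (f j)) (rev [m..<h]))"
    have R: "?R \<in> carrier_mat N N" by (rule mprod_carrier) auto
    \<comment> \<open>\<open>x\<^sub>h\<close> acts last and adds row \<open>h\<close>, which no earlier factor has modified, to row \<open>h - 1\<close>\<close>
    have "mprod N (map (\<lambda>j. xmat N j (f j)) (rev [m..<Suc h])) * M = xmat N h (f h) * (?R * M)"
      using True assoc_mult_mat[OF xmat_carrier R M] by simp
    also have "\<dots> = mat N nc (\<lambda>(a,b).
        M $$ (a,b) + (if m - 1 \<le> a \<and> a + 1 < Suc h then f (a+1) * M $$ (a+1,b) else 0))"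
      unfolding Suc.IH[OF Suc_leD[OF Suc.prems]] using True m Suc.prems M
      by (subst xmat_mult) (auto intro!: eq_matI)
    finally show ?thesis .
  qed
qed

definition xc_factor :: "nat \<Rightarrow> (nat \<Rightarrow> nat \<Rightarrow> complex) \<Rightarrow> nat \<Rightarrow> complex mat" where
  "xc_factor N \<sigma> m = mprod N (map (\<lambda>j. xmat N j (\<sigma> j m)) (rev [m..<N]))"

definition xc_tail :: "nat \<Rightarrow> (nat \<Rightarrow> nat \<Rightarrow> complex) \<Rightarrow> nat \<Rightarrow> complex mat" where
  "xc_tail N \<sigma> m = mprod N (map (xc_factor N \<sigma>) [m..<N])"

lemma xc_factor_carrier [simp]: "xc_factor N \<sigma> m \<in> carrier_mat N N"
  unfolding xc_factor_def by (rule mprod_carrier) auto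

lemma xc_tail_carrier [simp]: "xc_tail N \<sigma> m \<in> carrier_mat N N"
  unfolding xc_tail_def by (rule mprod_carrier) auto

lemma x_c_eq_xc_tail: "x_c n \<sigma> = xc_tail (n+1) \<sigma> 1"
  unfolding x_c_def xc_tail_def xc_factor_def by (subst mprod_concat) (auto simp: comp_def)

lemma xc_tail_Suc: "m < N \<Longrightarrow> xc_tail N \<sigma> m = xc_factor N \<sigma> m * xc_tail N \<sigma> (m+1)"
  by (simp add: xc_tail_def upt_conv_Cons)

lemma unit_upper_triangular_xc_tail: "1 \<le> m \<Longrightarrow> unit_upper_triangular N (xc_tail N \<sigma> m)"
  unfolding xc_tail_def xc_factor_def
  by (auto intro!: unit_upper_triangular_mprod unit_upper_triangular_xmat)

lemma xc_tail_top_rows: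
  assumes "a < m" and "a < N" and "b < N"
  shows "xc_tail N \<sigma> (m+1) $$ (a,b) = (if a = b then 1 else 0)"
proof -
  let ?P = "\<lambda>A :: complex mat. A \<in> carrier_mat N N \<and> (\<forall>a<N. \<forall>b<N. a < m \<longrightarrow> A $$ (a,b) = (if a = b then 1 else 0))"
  have mult: "?P (A * B)" if A: "?P A" and B: "?P B" for A B
  proof -
    have "(A * B) $$ (a,b) = (if a = b then 1 else 0)" if "a < N" "b < N" "a < m" for a b
    proof -
      have "(A * B) $$ (a,b) = (\<Sum>l<N. A $$ (a,l) * B $$ (l,b))"
        using A B that by (intro index_mult_mat_sum) auto
      also have "\<dots> = (\<Sum>l<N. if l = a then B $$ (a,b) else 0)"
        using A that by (intro sum.cong) auto
      finally show ?thesis using B that by simp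
    qed
    with A B show ?thesis by auto
  qed
  have factor: "?P (xc_factor N \<sigma> j)" if "m < j" for j
    unfolding xc_factor_def
    by (intro mprod_closed[where P = ?P] mult) (use that in \<open>auto simp: index_xmat\<close>)
  have "?P (xc_tail N \<sigma> (m+1))"
    unfolding xc_tail_def
  proof (rule mprod_closed[where P = ?P])
    fix A assume "A \<in> set (map (xc_factor N \<sigma>) [m+1..<N])"
    then obtain j where "m < j" "A = xc_factor N \<sigma> j" by (auto simp: Suc_le_eq)
    then show "?P A" using factor by blast
  qed (simp, rule mult)
  then show ?thesis using assms by auto
qed

lemma right_minor_xc_tail_Suc:
  assumes m: "1 \<le> m" and mk: "m + k \<le> N" and k: "1 \<le> k"
  shows "right_minor k (m - 1) (xc_tail N \<sigma> m)
    = (\<Prod>i<k. \<sigma> (m+i) m) * right_minor k m (xc_tail N \<sigma> (m+1))"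
proof -
  let ?Q = "xc_tail N \<sigma> (m+1)"
  have zero: "?Q $$ (m - 1, N - k + b) = 0" if "b < k" for b
    using xc_tail_top_rows[of "m - 1" m N "N - k + b" \<sigma>] m mk that by simp
  have "xc_tail N \<sigma> m = xc_factor N \<sigma> m * ?Q"
    using mk k by (intro xc_tail_Suc) simp
  also have "\<dots> = mat N N (\<lambda>(a,b).
      ?Q $$ (a,b) + (if m - 1 \<le> a \<and> a + 1 < N then \<sigma> (a+1) m * ?Q $$ (a+1,b) else 0))"
    unfolding xc_factor_def by (rule mprod_xmat_desc_mult[OF xc_tail_carrier m order.refl])
  finally have "right_minor k (m - 1) (xc_tail N \<sigma> m)
      = (\<Prod>i<k. \<sigma> (m - 1 + 1 + i) m) * right_minor k (m - 1 + 1) ?Q"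
    using m mk
    by (simp only:, intro right_minor_add_next_rows[where f = "\<lambda>j. \<sigma> j m"] zero) auto
  then show ?thesis using m by simp
qed

lemma right_minor_xc_tail_last: "k \<le> N \<Longrightarrow> right_minor k (N - k) (xc_tail N \<sigma> (N - k + 1)) = 1"
proof -
  assume k: "k \<le> N"
  have "unit_upper_triangular N (xc_tail N \<sigma> (N - k + 1))"
    by (rule unit_upper_triangular_xc_tail) simp
  then have "unit_upper_triangular k (mat k k (\<lambda>(a,b). xc_tail N \<sigma> (N - k + 1) $$ (N - k + a, N - k + b)))"
    using k by (auto simp: unit_upper_triangular_def)
  then have "det (mat k k (\<lambda>(a,b). xc_tail N \<sigma> (N - k + 1) $$ (N - k + a, N - k + b))) = 1"
    by (rule det_unit_upper_triangular)
  then show ?thesis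
    by (simp add: right_minor_def carrier_matD(2)[OF xc_tail_carrier])
qed

lemma right_minor_xc_tail:
  assumes k: "1 \<le> k" "k \<le> N" and m: "1 \<le> m" "m \<le> N - k + 1"
  shows "right_minor k (m - 1) (xc_tail N \<sigma> m) = (\<Prod>m'\<in>{m..N-k}. \<Prod>i<k. \<sigma> (m'+i) m')"
  using m(2)
proof (induction m rule: inc_induct)
  case base
  then show ?case using k right_minor_xc_tail_last[of k N \<sigma>] by simp
next
  case (step j)
  then have "1 \<le> j" "j + k \<le> N" using k m(1) by auto
  then show ?case
    using step.IH right_minor_xc_tail_Suc[of j k N \<sigma>] k by (simp add: prod.atLeast_Suc_atMost)
qed

lemma right_minor_x_c:
  "1 \<le> k \<Longrightarrow> k \<le> n + 1 \<Longrightarrow> right_minor k 0 (x_c n \<sigma>) = (\<Prod>m\<in>{1..n+1-k}. \<Prod>i<k. \<sigma> (m+i) m)"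
  using right_minor_xc_tail[of k "n+1" 1 \<sigma>] by (simp add: x_c_eq_xc_tail)

section \<open>Leading principal minors of \<open>b(t)\<close>\<close>

lemma mult_diag_transpose_w0dot:
  assumes "A \<in> carrier_mat m (n+1)"
  shows "A * mat_diag (n+1) d * transpose_mat (w0dot n)
    = mat m (n+1) (\<lambda>(a,b). A $$ (a, n - b) * d (n - b) * (-1)^b)"
  unfolding transpose_w0dot mat_diag_mult_right[OF assms] by (subst mult_monomial_mat) auto

lemma hw_coeff_mult_diag_transpose_w0dot:
  assumes A: "A \<in> carrier_mat (n+1) (n+1)" and k: "1 \<le> k" "k \<le> n + 1"
  shows "hw_coeff k (A * mat_diag (n+1) d * transpose_mat (w0dot n))
    = right_minor k 0 A * (\<Prod>c<k. d (n + 1 - k + c))"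
proof -
  define Z where "Z = mat k k (\<lambda>(a,c). A $$ (a, n + 1 - k + c))"
  let ?d = "\<lambda>c. d (n + 1 - k + c)" and ?W = "transpose_mat (w0dot (k - 1))"
  have Z: "Z \<in> carrier_mat (k - 1 + 1) (k - 1 + 1)" and W: "?W \<in> carrier_mat k k"
    using k w0dot_carrier[of "k - 1"] by (simp_all add: Z_def)
  have "hw_coeff k (A * mat_diag (n+1) d * transpose_mat (w0dot n))
      = det (mat k k (\<lambda>(a,b). A $$ (a, n - b) * d (n - b) * (-1)^b))"
    unfolding hw_coeff_def mult_diag_transpose_w0dot[OF A] using k
    by (auto intro!: arg_cong[where f = det] cong_mat)
  \<comment> \<open>the same column reversal, now of the last \<open>k\<close> columns of \<open>A\<close>\<close>
  also have "mat k k (\<lambda>(a,b). A $$ (a, n - b) * d (n - b) * (-1)^b) = Z * mat_diag k ?d * ?W"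
    using mult_diag_transpose_w0dot[OF Z, of ?d] k by (auto simp: Z_def intro!: cong_mat)
  also have "det (Z * mat_diag k ?d * ?W) = det Z * (\<Prod>c<k. ?d c)"
    using Z W k by (simp add: det_mult[of _ k] det_mat_diag det_transpose det_w0dot)
  finally show ?thesis
    using A by (simp add: right_minor_def Z_def)
qed

lemma prod_subdiagonal:
  fixes N k :: nat
  assumes "1 \<le> k"
  shows "(\<Prod>(i,j)\<in>{(i,j). 1 \<le> j \<and> j \<le> i \<and> i \<le> N \<and> i - j = k}. f i j) = (\<Prod>m\<in>{1..N-k}. f (m+k) m)"
proof -
  have "{(i,j). 1 \<le> j \<and> j \<le> i \<and> i \<le> N \<and> i - j = k} = (\<lambda>m. (m+k, m)) ` {1..N-k}"
    using assms by (auto simp: image_iff)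
  then show ?thesis
    by (simp add: prod.reindex inj_on_def)
qed

lemma prod_atLeast1_atMost_split:
  fixes N k :: nat
  assumes "k \<le> N"
  shows "(\<Prod>i\<in>{1..N}. f i) = (\<Prod>i\<in>{1..N-k}. f i) * (\<Prod>c<k. f (N - k + c + 1))"
proof -
  have "{1..N} = {1..N-k} \<union> {N-k+1..N}" using assms by auto
  then have "(\<Prod>i\<in>{1..N}. f i) = (\<Prod>i\<in>{1..N-k}. f i) * (\<Prod>i\<in>{N-k+1..N}. f i)"
    by (simp add: prod.union_disjoint)
  also have "(\<Prod>i\<in>{N-k+1..N}. f i) = (\<Prod>c<k. f (N - k + c + 1))"
    using assms by (intro prod.reindex_bij_witness[of _ "\<lambda>c. N - k + c + 1" "\<lambda>i. i - (N - k + 1)"]) auto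
  finally show ?thesis .
qed

lemma unit_upper_triangular_x_d: "unit_upper_triangular (n+1) (x_d n \<sigma>)"
  unfolding x_d_def
  by (auto intro!: unit_upper_triangular_mprod unit_upper_triangular_xmat unit_upper_triangular_one)

lemma hw_coeff_bmat:
  assumes "1 \<le> k" and "k \<le> n + 1"
  shows "hw_coeff k (bmat n t) = right_minor k 0 (x_c n (\<lambda>i j. t i j / t (i+1) j))
    * (\<Prod>c<k. t (n + 1 - k + c + 1) (n + 1 - k + c + 1))"
proof -
  let ?A = "x_c n (\<lambda>i j. t i j / t (i+1) j)" and ?d = "\<lambda>a. t (a+1) (a+1)"
  have A: "?A \<in> carrier_mat (n+1) (n+1)" by (simp add: x_c_eq_xc_tail)
  have diag: "mat (n+1) (n+1) (\<lambda>(a,b). if a = b then t (a+1) (a+1) else 0) = mat_diag (n+1) ?d"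
    by (auto simp: mat_diag_def intro!: cong_mat)
  have "hw_coeff k (bmat n t) = hw_coeff k (?A * mat_diag (n+1) ?d * transpose_mat (w0dot n))"
    unfolding bmat_def minv_w0dot diag using assms A w0dot_carrier[of n]
    by (intro hw_coeff_mult_minv_unit_upper_triangular[OF _ unit_upper_triangular_x_d]) auto
  also have "\<dots> = right_minor k 0 ?A * (\<Prod>c<k. ?d (n + 1 - k + c))"
    using assms by (intro hw_coeff_mult_diag_transpose_w0dot[OF A]) auto
  finally show ?thesis .
qed

lemma right_minor_x_c_ratios:
  fixes t :: "nat \<Rightarrow> nat \<Rightarrow> complex"
  assumes nz: "\<And>i j. 1 \<le> j \<Longrightarrow> j \<le> i \<Longrightarrow> i \<le> n + 1 \<Longrightarrow> t i j \<noteq> 0"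
    and k: "1 \<le> k" "k \<le> n + 1"
  shows "right_minor k 0 (x_c n (\<lambda>i j. t i j / t (i+1) j)) = (\<Prod>m\<in>{1..n+1-k}. t m m / t (m+k) m)"
proof -
  have "(\<Prod>i<k. t (m+i) m / t (m+i+1) m) = t m m / t (m+k) m" if m: "m \<in> {1..n+1-k}" for m
  proof -
    have "t (m+i) m \<noteq> 0" if "i \<le> k" for i
      using nz m that by auto
    then show ?thesis using prod_lessThan_telescope'[of k "\<lambda>i. t (m+i) m"] by simp
  qed
  then show ?thesis
    using k by (simp add: right_minor_x_c)
qed

theorem lemma9p3:
  fixes n k :: nat and t :: "nat \<Rightarrow> nat \<Rightarrow> complex"
  assumes "\<And>i j. 1 \<le> j \<Longrightarrow> j \<le> i \<Longrightarrow> i \<le> n + 1 \<Longrightarrow> t i j \<noteq> 0"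
    and "1 \<le> k" and "k \<le> n"
  shows "hw_coeff k (bmat n t) =
    (\<Prod>i\<in>{1..n+1}. t i i) *
    (\<Prod>(i,j)\<in>{(i,j). 1 \<le> j \<and> j \<le> i \<and> i \<le> n + 1 \<and> i - j = k}. inverse (t i j))"
proof -
  have kN: "k \<le> n + 1" using assms(3) by simp
  have "hw_coeff k (bmat n t) = right_minor k 0 (x_c n (\<lambda>i j. t i j / t (i+1) j))
      * (\<Prod>c<k. t (n + 1 - k + c + 1) (n + 1 - k + c + 1))"
    by (rule hw_coeff_bmat[OF assms(2) kN])
  also have "right_minor k 0 (x_c n (\<lambda>i j. t i j / t (i+1) j)) = (\<Prod>m\<in>{1..n+1-k}. t m m / t (m+k) m)"
    by (rule right_minor_x_c_ratios[OF assms(1,2) kN])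
  also have "(\<Prod>m\<in>{1..n+1-k}. t m m / t (m+k) m) * (\<Prod>c<k. t (n + 1 - k + c + 1) (n + 1 - k + c + 1))
      = (\<Prod>i\<in>{1..n+1}. t i i) * (\<Prod>m\<in>{1..n+1-k}. inverse (t (m+k) m))"
    unfolding prod_atLeast1_atMost_split[where N = "n+1" and f = "\<lambda>i. t i i", OF kN]
    by (simp add: divide_inverse prod.distrib ac_simps)
  also have "(\<Prod>m\<in>{1..n+1-k}. inverse (t (m+k) m))
      = (\<Prod>(i,j)\<in>{(i,j). 1 \<le> j \<and> j \<le> i \<and> i \<le> n + 1 \<and> i - j = k}. inverse (t i j))"
    by (rule prod_subdiagonal[symmetric, OF assms(2)])
  finally show ?thesis .
qed

end
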